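(* Let $f \colon \mathbb{R} \to \mathbb{R}$ be given by $f(x) = \ln\big(\frac{\sinh x}{x}\big) - \frac{x^2}{6}$ for $x \neq 0$ and $f(0) = 0$. Then $$\frac{f(q)}{p} - \frac{f(p)}{q} + \Big(\frac{1}{q} - \frac{1}{p}\Big) f(p-q) \ge 0$$ for all $p, q \in \mathbb{R} \setminus \{0\}$ with $q \le p$. For $p, q \in \mathbb{R}\setminus\{0\}$ with $p \le q$, the reverse inequality ($\le 0$) holds. *)

theory Defs
  imports Complex_Main
begin

definition f :: "real \<Rightarrow> real" where
  "f x = (if x = 0 then 0 else ln (sinh x / x) - x ^ 2 / 6)"

end

theory Submission
  imports Defs
begin

text \<open>
  Put \<open>g x = x * f x\<close>; it is odd, and the left-hand side equals
  \<open>(g q - g p + g (p - q)) / (p * q)\<close>. Since \<open>coth x \<le> 1/x + x/3\<close> for \<open>x > 0\<close>,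
  \<open>f\<close> is decreasing on \<open>(0, \<infinity>)\<close>, which makes \<open>g\<close> subadditive on \<open>[0, \<infinity>)\<close>.
  For \<open>q \<le> p\<close> the sign of the numerator then matches that of \<open>p * q\<close> in each
  sign pattern of \<open>p, q\<close>; exchanging \<open>p\<close> and \<open>q\<close> flips the sign of the whole
  expression, which gives the case \<open>p \<le> q\<close>.
\<close>

lemma sinh_le_mult_cosh:
  fixes x :: real
  assumes "0 \<le> x"
  shows "sinh x \<le> x * cosh x"
proof -
  have "(\<lambda>t. t * cosh t - sinh t) 0 \<le> (\<lambda>t. t * cosh t - sinh t) x"
  proof (rule DERIV_nonneg_imp_nondecreasing[OF assms])
    fix t :: real
    assume "0 \<le> t"
    have "((\<lambda>t. t * cosh t - sinh t) has_real_derivative t * sinh t) (at t)"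
      by (rule derivative_eq_intros refl | simp)+
    with \<open>0 \<le> t\<close> show "\<exists>y. ((\<lambda>t. t * cosh t - sinh t) has_real_derivative y) (at t) \<and> 0 \<le> y"
      by auto
  qed
  then show ?thesis
    by simp
qed

lemma three_mult_cosh_le_sinh:
  fixes x :: real
  assumes "0 \<le> x"
  shows "3 * x * cosh x \<le> (3 + x\<^sup>2) * sinh x"
proof -
  let ?d = "\<lambda>t. (3 + t\<^sup>2) * sinh t - 3 * t * cosh t"
  have "?d 0 \<le> ?d x"
  proof (rule DERIV_nonneg_imp_nondecreasing[OF assms])
    fix t :: real
    assume "0 \<le> t"
    have "(?d has_real_derivative t * (t * cosh t - sinh t)) (at t)"
      by (rule derivative_eq_intros refl | simp add: algebra_simps power2_eq_square)+
    moreover have "0 \<le> t * (t * cosh t - sinh t)"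
      using \<open>0 \<le> t\<close> sinh_le_mult_cosh[OF \<open>0 \<le> t\<close>] by simp
    ultimately show "\<exists>y. (?d has_real_derivative y) (at t) \<and> 0 \<le> y"
      by blast
  qed
  then show ?thesis
    by simp
qed

lemma f_antimono_on_pos: "antimono_on {0<..} f"
proof (rule monotone_onI)
  fix a b :: real
  assume "a \<in> {0<..}" "b \<in> {0<..}" "a \<le> b"
  then have "0 < a"
    by simp
  let ?h = "\<lambda>t. ln (sinh t) - ln t - t\<^sup>2 / 6"
  have "?h b \<le> ?h a"
  proof (rule DERIV_nonpos_imp_nonincreasing[OF \<open>a \<le> b\<close>])
    fix t :: real
    assume "a \<le> t"
    with \<open>0 < a\<close> have "0 < t" "0 < sinh t"
      by simp_all
    have "(?h has_real_derivative cosh t / sinh t - 1 / t - t / 3) (at t)"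
      by (rule derivative_eq_intros refl | use \<open>0 < t\<close> \<open>0 < sinh t\<close> in simp)+
    have "cosh t / sinh t \<le> (3 + t\<^sup>2) / (3 * t)"
      using three_mult_cosh_le_sinh[of t] \<open>0 < t\<close> \<open>0 < sinh t\<close>
      by (simp add: divide_simps mult.commute)
    moreover have "(3 + t\<^sup>2) / (3 * t) = 1 / t + t / 3"
      using \<open>0 < t\<close> by (simp add: field_simps power2_eq_square)
    ultimately have "cosh t / sinh t - 1 / t - t / 3 \<le> 0"
      by linarith
    with \<open>(?h has_real_derivative _) (at t)\<close>
    show "\<exists>y. (?h has_real_derivative y) (at t) \<and> y \<le> 0"
      by blast
  qed
  moreover have "f t = ?h t" if "0 < t" for t
    using that by (simp add: f_def ln_div)
  ultimately show "f b \<le> f a"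
    using \<open>0 < a\<close> \<open>a \<le> b\<close> by simp
qed

lemma f_minus [simp]: "f (- x) = f x"
  by (simp add: f_def)

lemma mult_antimono_subadditive:
  fixes h :: "real \<Rightarrow> real"
  assumes "antimono_on {0<..} h" "0 \<le> a" "0 \<le> b"
  shows "(a + b) * h (a + b) \<le> a * h a + b * h b"
proof (cases "a = 0 \<or> b = 0")
  case True
  then show ?thesis
    by auto
next
  case False
  with assms have "0 < a" "0 < b"
    by auto
  then have "h (a + b) \<le> h a" "h (a + b) \<le> h b"
    using assms(1) by (auto intro: monotone_onD)
  with \<open>0 < a\<close> \<open>0 < b\<close> have "a * h (a + b) \<le> a * h a" "b * h (a + b) \<le> b * h b"
    by (simp_all add: mult_left_mono)
  then show ?thesis
    by (simp add: distrib_right)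
qed

lemma odd_subadditive_quotient_nonneg:
  fixes g :: "real \<Rightarrow> real"
  assumes odd: "\<And>x. g (- x) = - g x"
    and subadditive: "\<And>a b. 0 \<le> a \<Longrightarrow> 0 \<le> b \<Longrightarrow> g (a + b) \<le> g a + g b"
    and "q \<le> p"
  shows "0 \<le> (g q - g p + g (p - q)) / (p * q)"
proof -
  consider "0 \<le> q" | "q < 0" "0 \<le> p" | "p < 0"
    by linarith
  then show ?thesis
  proof cases
    case 1
    with \<open>q \<le> p\<close> have "g p \<le> g q + g (p - q)"
      using subadditive[of q "p - q"] by simp
    with 1 \<open>q \<le> p\<close> show ?thesis
      by simp
  next
    case 2
    then have "g (p - q) \<le> g p + g (- q)"
      using subadditive[of p "- q"] by simp
    with 2 show ?thesis
      by (simp add: odd divide_nonpos_nonpos mult_nonneg_nonpos)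
  next
    case 3
    with \<open>q \<le> p\<close> have "g (- q) \<le> g (- p) + g (p - q)"
      using subadditive[of "- p" "p - q"] by simp
    moreover have "0 < p * q"
      using 3 \<open>q \<le> p\<close> by (simp add: mult_neg_neg)
    ultimately show ?thesis
      by (simp add: odd)
  qed
qed

theorem mainTheorem3:
  fixes p q :: real
  assumes "p \<noteq> 0" and "q \<noteq> 0"
  shows "(q \<le> p \<longrightarrow> f q / p - f p / q + (1 / q - 1 / p) * f (p - q) \<ge> 0) \<and>
         (p \<le> q \<longrightarrow> f q / p - f p / q + (1 / q - 1 / p) * f (p - q) \<le> 0)"
proof -
  define g where "g x = x * f x" for x
  have odd: "g (- x) = - g x" for x
    by (simp add: g_def)
  have subadditive: "g (a + b) \<le> g a + g b" if "0 \<le> a" "0 \<le> b" for a b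
    using mult_antimono_subadditive[OF f_antimono_on_pos that] by (simp add: g_def)
  have quotient: "f q / p - f p / q + (1 / q - 1 / p) * f (p - q)
      = (g q - g p + g (p - q)) / (p * q)"
    using assms by (simp add: g_def field_simps)
  have swapped: "(g q - g p + g (p - q)) / (p * q) = - ((g p - g q + g (q - p)) / (q * p))"
    using odd[of "p - q"] by (simp add: mult.commute minus_divide_left)
  show ?thesis
  proof (intro conjI impI)
    assume "q \<le> p"
    then show "0 \<le> f q / p - f p / q + (1 / q - 1 / p) * f (p - q)"
      unfolding quotient using odd_subadditive_quotient_nonneg[OF odd subadditive] by simp
  next
    assume "p \<le> q"
    then show "f q / p - f p / q + (1 / q - 1 / p) * f (p - q) \<le> 0"
      unfolding quotient swapped
      using odd_subadditive_quotient_nonneg[OF odd subadditive] by simp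
  qed
qed

end
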